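(* Let $S$ be a finite $p$-group and $\mathcal{A}$ a bifree $S$-algebra. If $\mathcal{A}(S)\neq0$ and there exists an $(S,S)$-invariant $\mathcal{O}$-basis $Y$ of $\mathcal{A}$ with $Y\subseteq\mathcal{A}^\times$, then $\mathcal{A}$ is divisible.
   Context: $\mathcal{O}$ is a complete local noetherian domain with maximal ideal $\mathfrak{m}$ and algebraically closed residue field $k$ of characteristic $p$ (possibly $\mathcal{O}=k$). An interior $S$-algebra is an $\mathcal{O}$-algebra $\mathcal{A}$, free of finite rank as an $\mathcal{O}$-module, with a group homomorphism $S\to\mathcal{A}^\times$; $S\times S$ acts on $\mathcal{A}$ by $(s,t)\cdot a=sat^{-1}$. It is a bifree $S$-algebra if it has an $\mathcal{O}$-basis $Y$ with $sY=Y=Ys$ for all $s\in S$ (an $(S,S)$-invariant basis) on which the left and right $S$-actions are free. For a subgroup $U\le S\times S$ the Brauer quotient is $\mathcal{A}(U)=\mathcal{A}^U/(\mathfrak{m}\mathcal{A}^U+\sum_{V<U}\mathrm{tr}_V^U(\mathcal{A}^V))$. For $P\le S$ and injective homomorphism $\varphi:P\to S$, $\mathcal{A}(\varphi)$ denotes $\mathcal{A}(\Delta(\varphi,P))$ with $\Delta(\varphi,P)=\{(\varphi(p),p):p\in P\}$, and $\mathcal{A}(P)=\mathcal{A}(\iota_P)$ for the inclusion $\iota_P$. The fixed-point fusion presystem $\mathfrak{F}_S(\mathcal{A})$ has objects the subgroups of $S$ and $\mathrm{Hom}(P,Q)=\{\varphi:P\to Q$ injective homomorphism $:\mathcal{A}(\varphi)\neq0\}$.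 $\mathcal{A}$ is divisible if $\mathfrak{F}_S(\mathcal{A})$ contains all inclusions between subgroups of $S$, is closed under composition (so is a category), and every morphism $\varphi:P\to Q$ is an inclusion composed with a group isomorphism $P\to\varphi(P)$ that is an isomorphism in $\mathfrak{F}_S(\mathcal{A})$ (its inverse also lies in $\mathfrak{F}_S(\mathcal{A})$). *)

theory Defs
  imports "HOL-Algebra.Coset" "HOL-Computational_Algebra.Polynomial"
begin

definition is_ideal :: "'o::comm_ring_1 set \<Rightarrow> bool" where
  "is_ideal I \<longleftrightarrow> 0 \<in> I \<and> (\<forall>x\<in>I. \<forall>y\<in>I. x + y \<in> I) \<and> (\<forall>r. \<forall>x\<in>I. r * x \<in> I)"

definition maximal_ideal :: "'o::comm_ring_1 set \<Rightarrow> bool" where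
  "maximal_ideal I \<longleftrightarrow> is_ideal I \<and> I \<noteq> UNIV \<and>
     (\<forall>J. is_ideal J \<and> I \<subseteq> J \<longrightarrow> J = I \<or> J = UNIV)"

definition ideal_gen :: "'o::comm_ring_1 set \<Rightarrow> 'o set" where
  "ideal_gen X = \<Inter>{I. is_ideal I \<and> X \<subseteq> I}"

fun ideal_pow :: "'o::comm_ring_1 set \<Rightarrow> nat \<Rightarrow> 'o set" where
  "ideal_pow m 0 = UNIV"
| "ideal_pow m (Suc n) = ideal_gen {a * b | a b. a \<in> m \<and> b \<in> ideal_pow m n}"

definition local_ring_max :: "'o::comm_ring_1 set \<Rightarrow> bool" where
  "local_ring_max m \<longleftrightarrow> maximal_ideal m \<and> (\<forall>I. maximal_ideal I \<longrightarrow> I = m)"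

definition noetherian_ring :: "'o::comm_ring_1 itself \<Rightarrow> bool" where
  "noetherian_ring _ \<longleftrightarrow> (\<forall>I::'o set. is_ideal I \<longrightarrow> (\<exists>F. finite F \<and> I = ideal_gen F))"

definition adically_complete :: "'o::comm_ring_1 set \<Rightarrow> bool" where
  "adically_complete m \<longleftrightarrow>
     (\<Inter>n. ideal_pow m n) = {0} \<and>
     (\<forall>x::nat \<Rightarrow> 'o. (\<forall>n. \<exists>N. \<forall>i\<ge>N. \<forall>j\<ge>N. x i - x j \<in> ideal_pow m n) \<longrightarrow>
        (\<exists>l. \<forall>n. \<exists>N. \<forall>i\<ge>N. x i - l \<in> ideal_pow m n))"

(* the residue field O/m is algebraically closed, expressed via representatives:
   every polynomial over O whose image in k[x] has positive degree has a root in k *)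
definition residue_alg_closed :: "'o::comm_ring_1 set \<Rightarrow> bool" where
  "residue_alg_closed m \<longleftrightarrow>
     (\<forall>f::'o poly. degree f \<ge> 1 \<and> lead_coeff f \<notin> m \<longrightarrow> (\<exists>x. poly f x \<in> m))"

definition residue_char :: "'o::comm_ring_1 set \<Rightarrow> nat \<Rightarrow> bool" where
  "residue_char m p \<longleftrightarrow> prime p \<and> of_nat p \<in> m"

definition coeff_ring :: "'o::idom set \<Rightarrow> nat \<Rightarrow> bool" where
  "coeff_ring m p \<longleftrightarrow> local_ring_max m \<and> noetherian_ring TYPE('o) \<and> adically_complete m
      \<and> residue_char m p \<and> residue_alg_closed m"

definition O_basis :: "('o::comm_ring_1 \<Rightarrow> 'a::ab_group_add \<Rightarrow> 'a) \<Rightarrow> 'a set \<Rightarrow> bool" where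
  "O_basis scale Y \<longleftrightarrow> \<not> module.dependent scale Y \<and> module.span scale Y = UNIV"

definition is_unit_elem :: "'a::ring_1 \<Rightarrow> bool" where
  "is_unit_elem a \<longleftrightarrow> (\<exists>b. a * b = 1 \<and> b * a = 1)"

definition interior_algebra ::
  "('o::comm_ring_1 \<Rightarrow> 'a::ring_1 \<Rightarrow> 'a) \<Rightarrow> ('g, 'b) monoid_scheme \<Rightarrow> ('g \<Rightarrow> 'a) \<Rightarrow> bool" where
  "interior_algebra scale S \<sigma> \<longleftrightarrow>
     module scale \<and>
     (\<forall>r a b. scale r (a * b) = scale r a * b \<and> scale r (a * b) = a * scale r b) \<and>
     (\<exists>B. finite B \<and> O_basis scale B) \<and>
     (\<forall>s\<in>carrier S. \<forall>t\<in>carrier S. \<sigma> (s \<otimes>\<^bsub>S\<^esub> t) = \<sigma> s * \<sigma> t) \<and>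
     \<sigma> \<one>\<^bsub>S\<^esub> = 1 \<and>
     (\<forall>s\<in>carrier S. is_unit_elem (\<sigma> s))"

definition SS_invariant :: "('g, 'b) monoid_scheme \<Rightarrow> ('g \<Rightarrow> 'a::ring_1) \<Rightarrow> 'a set \<Rightarrow> bool" where
  "SS_invariant S \<sigma> Y \<longleftrightarrow>
     (\<forall>s\<in>carrier S. (\<lambda>y. \<sigma> s * y) ` Y = Y \<and> (\<lambda>y. y * \<sigma> s) ` Y = Y)"

definition bifree_algebra ::
  "('o::comm_ring_1 \<Rightarrow> 'a::ring_1 \<Rightarrow> 'a) \<Rightarrow> ('g, 'b) monoid_scheme \<Rightarrow> ('g \<Rightarrow> 'a) \<Rightarrow> bool" where
  "bifree_algebra scale S \<sigma> \<longleftrightarrow> interior_algebra scale S \<sigma> \<and>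
     (\<exists>Y. O_basis scale Y \<and> SS_invariant S \<sigma> Y \<and>
        (\<forall>s\<in>carrier S. \<forall>y\<in>Y. \<sigma> s * y = y \<longrightarrow> s = \<one>\<^bsub>S\<^esub>) \<and>
        (\<forall>s\<in>carrier S. \<forall>y\<in>Y. y * \<sigma> s = y \<longrightarrow> s = \<one>\<^bsub>S\<^esub>))"

definition SS_act :: "('g, 'b) monoid_scheme \<Rightarrow> ('g \<Rightarrow> 'a::ring_1) \<Rightarrow> 'g \<times> 'g \<Rightarrow> 'a \<Rightarrow> 'a" where
  "SS_act S \<sigma> u a = \<sigma> (fst u) * a * \<sigma> (inv\<^bsub>S\<^esub> (snd u))"

definition fixed_pts :: "('g, 'b) monoid_scheme \<Rightarrow> ('g \<Rightarrow> 'a::ring_1) \<Rightarrow> ('g \<times> 'g) set \<Rightarrow> 'a set" where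
  "fixed_pts S \<sigma> U = {a. \<forall>u\<in>U. SS_act S \<sigma> u a = a}"

(* relative trace tr_V^U : A^V -> A^U, summing over representatives of the left cosets uV *)
definition rel_trace ::
  "('g, 'b) monoid_scheme \<Rightarrow> ('g \<Rightarrow> 'a::ring_1) \<Rightarrow> ('g \<times> 'g) set \<Rightarrow> ('g \<times> 'g) set \<Rightarrow> 'a \<Rightarrow> 'a" where
  "rel_trace S \<sigma> U V a =
     (\<Sum>C\<in>{u <#\<^bsub>S \<times>\<times> S\<^esub> V | u. u \<in> U}. SS_act S \<sigma> (SOME u. u \<in> C) a)"

definition brauer_kernel ::
  "('o::comm_ring_1 \<Rightarrow> 'a::ring_1 \<Rightarrow> 'a) \<Rightarrow> 'o set \<Rightarrow> ('g, 'b) monoid_scheme \<Rightarrow> ('g \<Rightarrow> 'a)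
     \<Rightarrow> ('g \<times> 'g) set \<Rightarrow> 'a set" where
  "brauer_kernel scale m S \<sigma> U = module.span scale
     ({scale r a | r a. r \<in> m \<and> a \<in> fixed_pts S \<sigma> U} \<union>
      (\<Union>V\<in>{V. subgroup V (S \<times>\<times> S) \<and> V \<subset> U}. rel_trace S \<sigma> U V ` fixed_pts S \<sigma> V))"

(* A(U) = A^U / (m A^U + sum_{V<U} tr_V^U(A^V)) is nonzero *)
definition brauer_nonzero ::
  "('o::comm_ring_1 \<Rightarrow> 'a::ring_1 \<Rightarrow> 'a) \<Rightarrow> 'o set \<Rightarrow> ('g, 'b) monoid_scheme \<Rightarrow> ('g \<Rightarrow> 'a)
     \<Rightarrow> ('g \<times> 'g) set \<Rightarrow> bool" where
  "brauer_nonzero scale m S \<sigma> U \<longleftrightarrow> \<not> fixed_pts S \<sigma> U \<subseteq> brauer_kernel scale m S \<sigma> U"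

definition Delta :: "('g \<Rightarrow> 'g) \<Rightarrow> 'g set \<Rightarrow> ('g \<times> 'g) set" where
  "Delta \<phi> P = {(\<phi> x, x) | x. x \<in> P}"

definition fusion_hom ::
  "('o::comm_ring_1 \<Rightarrow> 'a::ring_1 \<Rightarrow> 'a) \<Rightarrow> 'o set \<Rightarrow> ('g, 'b) monoid_scheme \<Rightarrow> ('g \<Rightarrow> 'a)
     \<Rightarrow> 'g set \<Rightarrow> 'g set \<Rightarrow> ('g \<Rightarrow> 'g) \<Rightarrow> bool" where
  "fusion_hom scale m S \<sigma> P Q \<phi> \<longleftrightarrow>
     subgroup P S \<and> subgroup Q S \<and> \<phi> ` P \<subseteq> Q \<and> inj_on \<phi> P \<and>
     (\<forall>x\<in>P. \<forall>y\<in>P. \<phi> (x \<otimes>\<^bsub>S\<^esub> y) = \<phi> x \<otimes>\<^bsub>S\<^esub> \<phi> y) \<and>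
     brauer_nonzero scale m S \<sigma> (Delta \<phi> P)"

definition divisible ::
  "('o::comm_ring_1 \<Rightarrow> 'a::ring_1 \<Rightarrow> 'a) \<Rightarrow> 'o set \<Rightarrow> ('g, 'b) monoid_scheme \<Rightarrow> ('g \<Rightarrow> 'a) \<Rightarrow> bool" where
  "divisible scale m S \<sigma> \<longleftrightarrow>
     (\<forall>P Q. subgroup P S \<and> subgroup Q S \<and> P \<subseteq> Q \<longrightarrow> fusion_hom scale m S \<sigma> P Q id) \<and>
     (\<forall>P Q R \<phi> \<psi>. fusion_hom scale m S \<sigma> P Q \<phi> \<and> fusion_hom scale m S \<sigma> Q R \<psi>
        \<longrightarrow> fusion_hom scale m S \<sigma> P R (\<psi> \<circ> \<phi>)) \<and>
     (\<forall>P Q \<phi>. fusion_hom scale m S \<sigma> P Q \<phi> \<longrightarrow>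
        fusion_hom scale m S \<sigma> P (\<phi> ` P) \<phi> \<and>
        fusion_hom scale m S \<sigma> (\<phi> ` P) P (inv_into P \<phi>))"

end

theory Submission
  imports Defs "HOL-Algebra.Group_Action" "HOL-Algebra.Left_Coset"
begin

(* For a p-subgroup U of S x S, A(U) is nonzero iff U fixes an element of the invariant basis Y.
   If y in Y is U-fixed, the coefficient of y maps the Brauer kernel into m, because a relative
   trace from a proper subgroup multiplies it by an index divisible by p. If no element of Y is
   U-fixed, every U-fixed element is a combination of U-orbit sums of basis elements, and these
   are relative traces from proper stabilizers.
   Hence A(S) <> 0 yields y0 in Y commuting with S, and phi is a morphism of the fusion presystem
   iff Delta(phi, P) fixes a basis element. Products and inverses of such basis elements are
   units fixed by the twisted diagonals of composites and inverses, and a unit a fixed by a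
   p-group U forces a U-fixed basis element: b |-> (coefficient of y0 in b a^-1 y0) is constant
   on U-orbits of Y and takes the value 1 at a, so otherwise 1 would be divisible by p. *)

lemma group_action_restrict:
  fixes G (structure)
  assumes "group G"
    and closed: "\<And>g x. g \<in> carrier G \<Longrightarrow> x \<in> X \<Longrightarrow> act g x \<in> X"
    and one: "\<And>x. x \<in> X \<Longrightarrow> act \<one> x = x"
    and mult: "\<And>g h x. g \<in> carrier G \<Longrightarrow> h \<in> carrier G \<Longrightarrow> x \<in> X \<Longrightarrow>
                 act (g \<otimes> h) x = act g (act h x)"
  shows "group_action G X (\<lambda>g. restrict (act g) X)"
proof -
  interpret group G by fact
  have bij: "restrict (act g) X \<in> Bij X" if g: "g \<in> carrier G" for g
  proof -
    have cancel: "act (inv g) (act g x) = x" "act g (act (inv g) x) = x" if "x \<in> X" for x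
      using g that by (simp_all add: mult[symmetric] one)
    have "bij_betw (act g) X X"
      by (rule bij_betw_byWitness[where f' = "act (inv g)"]) (use g cancel closed in auto)
    then show ?thesis by (simp add: Bij_def)
  qed
  show ?thesis
    unfolding group_action_def
  proof (rule group_hom.intro[OF \<open>group G\<close> group_BijGroup], rule group_hom_axioms.intro, rule homI)
    show "restrict (act g) X \<in> carrier (BijGroup X)" if "g \<in> carrier G" for g
      using bij[OF that] by (simp add: BijGroup_def)
    show "restrict (act (g \<otimes> h)) X = restrict (act g) X \<otimes>\<^bsub>BijGroup X\<^esub> restrict (act h) X"
      if "g \<in> carrier G" "h \<in> carrier G" for g h
      using that bij[OF that(1)] bij[OF that(2)]
      by (auto simp: BijGroup_def compose_def mult closed)
  qed
qed

lemma prime_power_card_subgroup: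
  fixes G (structure)
  assumes "group G" "card (carrier G) = p ^ n" "prime p" "subgroup H G"
  shows "\<exists>k. card H = p ^ k"
proof -
  have "card (rcosets H) * card H = p ^ n"
    using group.lagrange[OF assms(1,4)] assms(2) by (simp add: Coset.order_def)
  then show ?thesis
    by (metis assms(3) dvd_triv_right divides_primepow_nat)
qed

lemma prime_dvd_card_lcosets:
  fixes G (structure)
  assumes "group G" "card (carrier G) = p ^ n" "prime p" "subgroup H G" "H \<noteq> carrier G"
  shows "p dvd card (lcosets H)"
proof -
  have fin: "finite (carrier G)"
    using assms(2,3) by (metis card_ge_0_finite prime_gt_0_nat zero_less_power)
  then have lagrange: "card (lcosets H) * card H = p ^ n"
    using group.l_lagrange[OF assms(1)] assms(2,4) by (simp add: Coset.order_def)
  then obtain i where i: "card (lcosets H) = p ^ i"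
    by (metis assms(3) dvd_triv_left divides_primepow_nat)
  have "card H < p ^ n"
    using fin assms(2,5) subgroup.subset[OF assms(4)] by (metis psubsetI psubset_card_mono)
  then have "i \<noteq> 0"
    using lagrange i by (metis less_irrefl mult_1 power_0)
  then show ?thesis
    using i by simp
qed

lemma prime_dvd_sum_if_no_fixed_points:
  fixes G (structure) and f :: "'x \<Rightarrow> 'r::comm_ring_1"
  assumes "group G" "card (carrier G) = p ^ n" "prime p" "finite X"
    and closed: "\<And>g x. g \<in> carrier G \<Longrightarrow> x \<in> X \<Longrightarrow> act g x \<in> X"
    and one: "\<And>x. x \<in> X \<Longrightarrow> act \<one> x = x"
    and mult: "\<And>g h x. g \<in> carrier G \<Longrightarrow> h \<in> carrier G \<Longrightarrow> x \<in> X \<Longrightarrow>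
                 act (g \<otimes> h) x = act g (act h x)"
    and no_fixed: "\<And>x. x \<in> X \<Longrightarrow> \<exists>g\<in>carrier G. act g x \<noteq> x"
    and invariant: "\<And>g x. g \<in> carrier G \<Longrightarrow> x \<in> X \<Longrightarrow> f (act g x) = f x"
  shows "of_nat p dvd sum f X"
proof -
  interpret group G by fact
  let ?\<phi> = "\<lambda>g. restrict (act g) X"
  interpret group_action G X ?\<phi>
    using group_action_restrict[OF assms(1) closed one mult] .
  have "of_nat p dvd sum f Ob" if Ob_orbit: "Ob \<in> orbits G X ?\<phi>" for Ob
  proof -
    obtain x where x: "x \<in> X" and orbit: "Ob = orbit G ?\<phi> x"
      using Ob_orbit unfolding orbits_def by blast
    then have Ob: "Ob = (\<lambda>g. act g x) ` carrier G"
      by (auto simp: orbit_def)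
    have "card Ob * card (stabilizer G ?\<phi> x) = p ^ n"
      using orbit_stabilizer_theorem[OF x] orbit assms(2) by (simp add: Coset.order_def)
    then obtain i where i: "card Ob = p ^ i"
      by (metis assms(3) dvd_triv_left divides_primepow_nat)
    have "Ob \<noteq> {x}"
      using Ob no_fixed[OF x] by auto
    moreover have "x \<in> Ob"
      using Ob one[OF x] one_closed by force
    ultimately have "i \<noteq> 0"
      using i by (metis card_1_singletonE power_0 singletonD)
    moreover have "sum f Ob = (\<Sum>y\<in>Ob. f x)"
      using Ob invariant[OF _ x] by (intro sum.cong) auto
    ultimately show ?thesis using i by simp
  qed
  then show ?thesis
    using disjoint_sum[OF \<open>finite X\<close>, of f] dvd_sum by metis
qed

lemma hom_inv_into_subgroup:
  fixes G (structure)
  assumes "group G" "subgroup P G" "\<phi> \<in> hom (G\<lparr>carrier := P\<rparr>) G" "inj_on \<phi> P"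
  shows "inv_into P \<phi> \<in> hom (G\<lparr>carrier := \<phi> ` P\<rparr>) G"
proof -
  interpret P: group "G\<lparr>carrier := P\<rparr>"
    using subgroup.subgroup_is_group[OF assms(2,1)] .
  have "\<phi> \<in> iso (G\<lparr>carrier := P\<rparr>) (G\<lparr>carrier := \<phi> ` P\<rparr>)"
    using assms(3,4) by (auto simp: iso_def hom_def bij_betw_def)
  then have "inv_into P \<phi> \<in> iso (G\<lparr>carrier := \<phi> ` P\<rparr>) (G\<lparr>carrier := P\<rparr>)"
    using P.iso_set_sym by fastforce
  then show ?thesis
    using subgroup.subset[OF assms(2)] by (auto simp: iso_def hom_def)
qed

lemma Delta_eq_image: "Delta \<phi> P = (\<lambda>x. (\<phi> x, x)) ` P"
  by (auto simp: Delta_def)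

lemma ball_Delta_iff: "(\<forall>u\<in>Delta \<phi> P. Q u) \<longleftrightarrow> (\<forall>x\<in>P. Q (\<phi> x, x))"
  by (auto simp: Delta_def)

lemma subgroup_Delta:
  fixes G (structure)
  assumes "group G" "subgroup P G" "\<phi> \<in> hom (G\<lparr>carrier := P\<rparr>) G"
  shows "subgroup (Delta \<phi> P) (G \<times>\<times> G)"
proof -
  have "(\<lambda>x. (\<phi> x, x)) \<in> hom (G\<lparr>carrier := P\<rparr>) (G \<times>\<times> G)"
    using assms(3) subgroup.subset[OF assms(2)] by (auto simp: hom_paired hom_def)
  then have "group_hom (G\<lparr>carrier := P\<rparr>) (G \<times>\<times> G) (\<lambda>x. (\<phi> x, x))"
    using assms(1,2) by (simp add: group_hom_def group_hom_axioms_def DirProd_group subgroup.subgroup_is_group)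
  then show ?thesis
    unfolding Delta_eq_image using group_hom.img_is_subgroup by fastforce
qed

lemma card_Delta: "card (Delta \<phi> P) = card P"
  unfolding Delta_eq_image by (simp add: card_image inj_on_def)

lemma (in module) representation_module_hom_image:
  assumes "independent B" "span B = UNIV" "module_hom scale scale f"
    and "f ` B \<subseteq> B" "inj_on f B" "y \<in> B"
  shows "representation B (f a) (f y) = representation B a y"
proof -
  interpret f: module_hom scale scale f by fact
  let ?R = "representation B a"
  let ?F = "{b. ?R b \<noteq> 0}"
  have F: "finite ?F" "?F \<subseteq> B"
    using finite_representation representation_ne_zero by auto
  have "f a = f (\<Sum>b\<in>?F. scale (?R b) b)"
    using sum_nonzero_representation_eq[OF assms(1), of a] assms(2) by simp
  also have "\<dots> = (\<Sum>b\<in>?F. scale (?R b) (f b))"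
    by (simp add: f.sum f.scale)
  finally have "f a = (\<Sum>b\<in>?F. scale (?R b) (f b))" .
  then have "representation B (f a) (f y) = (\<Sum>b\<in>?F. ?R b * representation B (f b) (f y))"
    using assms(1,2) by (simp add: representation_sum representation_scale)
  also have "\<dots> = (\<Sum>b\<in>?F. if b = y then ?R b else 0)"
  proof (rule sum.cong)
    show "?R b * representation B (f b) (f y) = (if b = y then ?R b else 0)" if "b \<in> ?F" for b
      using that F(2) assms(4-6)
      by (auto simp: representation_basis[OF assms(1)] image_subset_iff inj_on_eq_iff)
  qed simp
  also have "\<dots> = ?R y"
    using F(1) by (simp add: sum.delta)
  finally show ?thesis .
qed

locale invariant_basis_algebra = module scale
  for scale :: "'o::comm_ring_1 \<Rightarrow> 'a::ring_1 \<Rightarrow> 'a" +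
  fixes S :: "('g, 'b) monoid_scheme" and \<sigma> :: "'g \<Rightarrow> 'a" and Y :: "'a set"
  assumes scale_mult_left: "scale r (a * b) = scale r a * b"
    and scale_mult_right: "scale r (a * b) = a * scale r b"
    and group_S: "group S"
    and \<sigma>_mult: "\<And>s t. s \<in> carrier S \<Longrightarrow> t \<in> carrier S \<Longrightarrow> \<sigma> (s \<otimes>\<^bsub>S\<^esub> t) = \<sigma> s * \<sigma> t"
    and \<sigma>_one: "\<sigma> \<one>\<^bsub>S\<^esub> = 1"
    and independent_Y: "independent Y" and span_Y: "span Y = UNIV"
    and SS_invariant_Y: "SS_invariant S \<sigma> Y"
begin

interpretation S: group S by (rule group_S)

lemma group_SS: "group (S \<times>\<times> S)"
  using DirProd_group[OF group_S group_S] .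

interpretation SS: group "S \<times>\<times> S" by (rule group_SS)

abbreviation act :: "'g \<times> 'g \<Rightarrow> 'a \<Rightarrow> 'a" where
  "act \<equiv> SS_act S \<sigma>"

lemma \<sigma>_inv_left: "s \<in> carrier S \<Longrightarrow> \<sigma> (inv\<^bsub>S\<^esub> s) * \<sigma> s = 1"
  by (metis S.inv_closed S.l_inv \<sigma>_one \<sigma>_mult)

lemma \<sigma>_inv_right: "s \<in> carrier S \<Longrightarrow> \<sigma> s * \<sigma> (inv\<^bsub>S\<^esub> s) = 1"
  by (metis S.inv_closed S.r_inv \<sigma>_one \<sigma>_mult)

lemma SS_act_one [simp]: "act (\<one>\<^bsub>S\<^esub>, \<one>\<^bsub>S\<^esub>) a = a"
  by (simp add: SS_act_def \<sigma>_one)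

lemma SS_act_mult:
  assumes "u \<in> carrier (S \<times>\<times> S)" "v \<in> carrier (S \<times>\<times> S)"
  shows "act (u \<otimes>\<^bsub>S \<times>\<times> S\<^esub> v) a = act u (act v a)"
  using assms by (cases u, cases v) (simp add: SS_act_def \<sigma>_mult S.inv_mult_group mult.assoc)

lemma SS_act_inv_cancel:
  assumes "u \<in> carrier (S \<times>\<times> S)"
  shows "act (inv\<^bsub>S \<times>\<times> S\<^esub> u) (act u a) = a"
  using SS_act_mult[symmetric, OF SS.inv_closed assms] assms by simp

lemma SS_act_fixed_iff:
  assumes "s \<in> carrier S" "t \<in> carrier S"
  shows "act (s, t) b = b \<longleftrightarrow> \<sigma> s * b = b * \<sigma> t"
proof
  assume fixed: "act (s, t) b = b"
  have "\<sigma> s * b = \<sigma> s * b * (\<sigma> (inv\<^bsub>S\<^esub> t) * \<sigma> t)"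
    using \<sigma>_inv_left[OF assms(2)] by simp
  also have "\<dots> = act (s, t) b * \<sigma> t"
    by (simp add: SS_act_def mult.assoc)
  finally show "\<sigma> s * b = b * \<sigma> t"
    using fixed by simp
next
  assume "\<sigma> s * b = b * \<sigma> t"
  then have "act (s, t) b = b * (\<sigma> t * \<sigma> (inv\<^bsub>S\<^esub> t))"
    by (simp add: SS_act_def mult.assoc)
  then show "act (s, t) b = b"
    using \<sigma>_inv_right[OF assms(2)] by simp
qed

lemma SS_act_fixed_mult:
  assumes "s \<in> carrier S" "t \<in> carrier S" "r \<in> carrier S"
    and "act (s, t) b = b" "act (t, r) c = c"
  shows "act (s, r) (b * c) = b * c"
proof -
  have "\<sigma> s * (b * c) = b * (\<sigma> t * c)"
    using SS_act_fixed_iff[OF assms(1,2)] assms(4) by (simp add: mult.assoc[symmetric])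
  also have "\<dots> = (b * c) * \<sigma> r"
    using SS_act_fixed_iff[OF assms(2,3)] assms(5) by (simp add: mult.assoc)
  finally show ?thesis
    using SS_act_fixed_iff[OF assms(1,3)] by simp
qed

lemma SS_act_fixed_inverse:
  assumes "s \<in> carrier S" "t \<in> carrier S" "act (s, t) a = a" "a * w = 1" "w * a = 1"
  shows "act (t, s) w = w"
proof -
  have "\<sigma> t * w = w * a * \<sigma> t * w"
    using assms(5) by simp
  also have "\<dots> = w * (a * \<sigma> t) * w"
    by (simp add: mult.assoc)
  also have "\<dots> = w * (\<sigma> s * a) * w"
    using SS_act_fixed_iff[OF assms(1,2)] assms(3) by simp
  also have "\<dots> = w * \<sigma> s * (a * w)"
    by (simp add: mult.assoc)
  finally show ?thesis
    using SS_act_fixed_iff[OF assms(2,1)] assms(4) by simp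
qed

lemma module_hom_SS_act: "module_hom scale scale (act u)"
  unfolding SS_act_def
  by unfold_locales (simp_all add: algebra_simps scale_mult_left[symmetric] scale_mult_right[symmetric])

lemma SS_act_basis:
  assumes "u \<in> carrier (S \<times>\<times> S)" "y \<in> Y"
  shows "act u y \<in> Y"
proof -
  obtain s t where u: "u = (s, t)" and st: "s \<in> carrier S" "inv\<^bsub>S\<^esub> t \<in> carrier S"
    using assms(1) by (cases u) auto
  have left: "\<sigma> s * y \<in> Y"
    using SS_invariant_Y st(1) assms(2) unfolding SS_invariant_def by blast
  show ?thesis
    using SS_invariant_Y st(2) imageI[OF left, of "\<lambda>z. z * \<sigma> (inv\<^bsub>S\<^esub> t)"]
    unfolding SS_invariant_def SS_act_def u by auto
qed

lemma representation_SS_act: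
  assumes "u \<in> carrier (S \<times>\<times> S)" "y \<in> Y"
  shows "representation Y (act u a) (act u y) = representation Y a y"
proof (rule representation_module_hom_image[OF independent_Y span_Y module_hom_SS_act _ _ assms(2)])
  show "act u ` Y \<subseteq> Y" using SS_act_basis[OF assms(1)] by blast
  show "inj_on (act u) Y" by (metis SS_act_inv_cancel[OF assms(1)] inj_onI)
qed

lemma SS_act_coset_representative:
  assumes "subgroup V (S \<times>\<times> S)" "u \<in> carrier (S \<times>\<times> S)" "\<forall>v\<in>V. act v b = b"
  shows "act (SOME w. w \<in> u <#\<^bsub>S \<times>\<times> S\<^esub> V) b = act u b"
proof -
  have "u \<in> u <#\<^bsub>S \<times>\<times> S\<^esub> V"
    using SS.lcos_self[OF assms(2,1)] .
  then have "(SOME w. w \<in> u <#\<^bsub>S \<times>\<times> S\<^esub> V) \<in> u <#\<^bsub>S \<times>\<times> S\<^esub> V"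
    by (rule someI)
  then obtain v where "v \<in> V" "(SOME w. w \<in> u <#\<^bsub>S \<times>\<times> S\<^esub> V) = u \<otimes>\<^bsub>S \<times>\<times> S\<^esub> v"
    by (auto simp: l_coset_def)
  then show ?thesis
    using SS_act_mult[OF assms(2)] subgroup.mem_carrier[OF assms(1)] assms(3) by simp
qed

lemma subgroup_stabilizer:
  assumes U: "subgroup U (S \<times>\<times> S)"
  shows "subgroup {u \<in> U. act u b = b} (S \<times>\<times> S)"
proof (rule SS.subgroupI)
  have U_carrier: "U \<subseteq> carrier (S \<times>\<times> S)"
    using subgroup.subset[OF U] .
  then show "{u \<in> U. act u b = b} \<subseteq> carrier (S \<times>\<times> S)"
    by auto
  have "\<one>\<^bsub>S \<times>\<times> S\<^esub> \<in> {u \<in> U. act u b = b}"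
    using subgroup.one_closed[OF U] by simp
  then show "{u \<in> U. act u b = b} \<noteq> {}" by blast
  show "inv\<^bsub>S \<times>\<times> S\<^esub> u \<in> {u \<in> U. act u b = b}" if "u \<in> {u \<in> U. act u b = b}" for u
    using that U_carrier SS_act_inv_cancel[of u b] subgroup.m_inv_closed[OF U] by auto
  show "u \<otimes>\<^bsub>S \<times>\<times> S\<^esub> v \<in> {u \<in> U. act u b = b}"
    if "u \<in> {u \<in> U. act u b = b}" "v \<in> {u \<in> U. act u b = b}" for u v
    using that U_carrier SS_act_mult[of u v b] subgroup.m_closed[OF U] by auto
qed

lemma rel_trace_stabilizer:
  fixes b :: 'a
  assumes U: "subgroup U (S \<times>\<times> S)"
  defines "V \<equiv> {u \<in> U. act u b = b}"
  shows "rel_trace S \<sigma> U V b = \<Sum>((\<lambda>u. act u b) ` U)"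
proof -
  have U_carrier: "U \<subseteq> carrier (S \<times>\<times> S)"
    using subgroup.subset[OF U] .
  have V: "subgroup V (S \<times>\<times> S)"
    unfolding V_def by (rule subgroup_stabilizer[OF U])
  let ?cosets = "{u <#\<^bsub>S \<times>\<times> S\<^esub> V | u. u \<in> U}"
  let ?F = "\<lambda>C. act (SOME w. w \<in> C) b"
  have F_coset: "?F (u <#\<^bsub>S \<times>\<times> S\<^esub> V) = act u b" if "u \<in> U" for u
    using SS_act_coset_representative[OF V] that U_carrier by (auto simp: V_def)
  have "inj_on ?F ?cosets"
  proof (rule inj_onI)
    fix C1 C2 assume "C1 \<in> ?cosets" "C2 \<in> ?cosets" and F_eq: "?F C1 = ?F C2"
    then obtain u1 u2 where u: "u1 \<in> U" "u2 \<in> U"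
      and C: "C1 = u1 <#\<^bsub>S \<times>\<times> S\<^esub> V" "C2 = u2 <#\<^bsub>S \<times>\<times> S\<^esub> V"
      by blast
    have u_carrier: "u1 \<in> carrier (S \<times>\<times> S)" "u2 \<in> carrier (S \<times>\<times> S)"
      using u U_carrier by auto
    have "act (inv\<^bsub>S \<times>\<times> S\<^esub> u2 \<otimes>\<^bsub>S \<times>\<times> S\<^esub> u1) b = act (inv\<^bsub>S \<times>\<times> S\<^esub> u2) (act u2 b)"
      using SS_act_mult[OF SS.inv_closed u_carrier(1)] u_carrier F_eq F_coset u C by simp
    then have "inv\<^bsub>S \<times>\<times> S\<^esub> u2 \<otimes>\<^bsub>S \<times>\<times> S\<^esub> u1 \<in> V"
      using SS_act_inv_cancel[OF u_carrier(2)] subgroup.m_closed[OF U subgroup.m_inv_closed[OF U]] u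
      by (simp add: V_def)
    then have "u1 \<in> u2 <#\<^bsub>S \<times>\<times> S\<^esub> V"
      using subgroup.lcos_module_rev[OF V group_SS] u_carrier by blast
    then show "C1 = C2"
      using SS.l_repr_independence[OF _ u_carrier(2) V] C by blast
  qed
  moreover have "?F ` ?cosets = (\<lambda>u. act u b) ` U"
  proof -
    have "?cosets = (\<lambda>u. u <#\<^bsub>S \<times>\<times> S\<^esub> V) ` U" by blast
    then show ?thesis
      using F_coset by (simp add: image_image cong: image_cong)
  qed
  ultimately show ?thesis
    unfolding rel_trace_def using sum.reindex[of ?F ?cosets "\<lambda>z. z"] by simp
qed

lemma orbit_sum_in_brauer_kernel:
  assumes U: "subgroup U (S \<times>\<times> S)" and not_fixed: "\<exists>u\<in>U. act u b \<noteq> b"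
  shows "\<Sum>((\<lambda>u. act u b) ` U) \<in> brauer_kernel scale m S \<sigma> U"
proof -
  define V where "V = {u \<in> U. act u b = b}"
  have "subgroup V (S \<times>\<times> S)" "V \<subset> U" "b \<in> fixed_pts S \<sigma> V"
    using subgroup_stabilizer[OF U] not_fixed by (auto simp: V_def fixed_pts_def)
  then have "rel_trace S \<sigma> U V b \<in> brauer_kernel scale m S \<sigma> U"
    unfolding brauer_kernel_def by (blast intro: span_base)
  then show ?thesis
    using rel_trace_stabilizer[OF U] by (simp add: V_def)
qed

lemma fixed_in_span_orbit_sums:
  assumes U: "subgroup U (S \<times>\<times> S)" and a_fixed: "\<forall>u\<in>U. act u a = a"
  shows "a \<in> span ((\<lambda>y. \<Sum>((\<lambda>u. act u y) ` U)) ` Y)"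
proof -
  have U_carrier: "U \<subseteq> carrier (S \<times>\<times> S)"
    using subgroup.subset[OF U] .
  let ?H = "(S \<times>\<times> S)\<lparr>carrier := U\<rparr>"
  let ?R = "representation Y a"
  let ?X = "{b. ?R b \<noteq> 0}"
  have X: "finite ?X" "?X \<subseteq> Y"
    using finite_representation representation_ne_zero by auto
  have R_invariant: "?R (act u y) = ?R y" if "u \<in> U" "y \<in> Y" for u y
    using representation_SS_act[of u y a] that U_carrier a_fixed by auto
  interpret U_action: group_action ?H ?X "\<lambda>u. restrict (act u) ?X"
  proof (rule group_action_restrict)
    show "group ?H"
      by (rule subgroup.subgroup_is_group[OF U group_SS])
    show "act u y \<in> ?X" if "u \<in> carrier ?H" "y \<in> ?X" for u y
      using that X(2) R_invariant[of u y] by auto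
    show "act (u \<otimes>\<^bsub>?H\<^esub> v) y = act u (act v y)" if "u \<in> carrier ?H" "v \<in> carrier ?H" for u v y
      using that U_carrier SS_act_mult[of u v y] by auto
  qed simp
  have "a = (\<Sum>b\<in>?X. scale (?R b) b)"
    using sum_nonzero_representation_eq[OF independent_Y] span_Y by simp
  also have "\<dots> = (\<Sum>Ob\<in>orbits ?H ?X (\<lambda>u. restrict (act u) ?X). \<Sum>b\<in>Ob. scale (?R b) b)"
    by (rule U_action.disjoint_sum[OF X(1), symmetric])
  also have "\<dots> \<in> span ((\<lambda>y. \<Sum>((\<lambda>u. act u y) ` U)) ` Y)"
  proof (rule span_sum)
    fix Ob assume "Ob \<in> orbits ?H ?X (\<lambda>u. restrict (act u) ?X)"
    then obtain y where y: "y \<in> ?X" and "Ob = orbit ?H (\<lambda>u. restrict (act u) ?X) y"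
      unfolding orbits_def by blast
    then have Ob: "Ob = (\<lambda>u. act u y) ` U"
      by (auto simp: orbit_def)
    have "(\<Sum>b\<in>Ob. scale (?R b) b) = (\<Sum>b\<in>Ob. scale (?R y) b)"
      using Ob R_invariant y X(2) by (intro sum.cong) auto
    also have "\<dots> = scale (?R y) (\<Sum>Ob)"
      by (simp add: scale_sum_right)
    also have "\<dots> \<in> span ((\<lambda>y. \<Sum>((\<lambda>u. act u y) ` U)) ` Y)"
      using Ob y X(2) by (intro span_scale span_base) auto
    finally show "(\<Sum>b\<in>Ob. scale (?R b) b) \<in> span ((\<lambda>y. \<Sum>((\<lambda>u. act u y) ` U)) ` Y)" .
  qed
  finally show ?thesis .
qed

lemma fixed_basis_element_if_brauer_nonzero:
  assumes U: "subgroup U (S \<times>\<times> S)" and nonzero: "brauer_nonzero scale m S \<sigma> U"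
  shows "\<exists>y\<in>Y. \<forall>u\<in>U. act u y = y"
proof (rule ccontr)
  assume "\<not> ?thesis"
  then have "\<Sum>((\<lambda>u. act u y) ` U) \<in> brauer_kernel scale m S \<sigma> U" if "y \<in> Y" for y
    using orbit_sum_in_brauer_kernel[OF U, of y m] that by blast
  then have "span ((\<lambda>y. \<Sum>((\<lambda>u. act u y) ` U)) ` Y) \<subseteq> brauer_kernel scale m S \<sigma> U"
    unfolding brauer_kernel_def by (intro span_minimal[OF _ subspace_span]) blast
  then have "fixed_pts S \<sigma> U \<subseteq> brauer_kernel scale m S \<sigma> U"
    using fixed_in_span_orbit_sums[OF U] by (auto simp: fixed_pts_def)
  then show False
    using nonzero by (simp add: brauer_nonzero_def)
qed

lemma representation_rel_trace:
  assumes U: "subgroup U (S \<times>\<times> S)" and V: "subgroup V (S \<times>\<times> S)" "V \<subseteq> U"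
    and y: "y \<in> Y" "\<forall>u\<in>U. act u y = y"
  shows "representation Y (rel_trace S \<sigma> U V a) y
           = of_nat (card (lcosets\<^bsub>(S \<times>\<times> S)\<lparr>carrier := U\<rparr>\<^esub> V)) * representation Y a y"
proof -
  let ?H = "(S \<times>\<times> S)\<lparr>carrier := U\<rparr>"
  interpret H: group ?H
    by (rule subgroup.subgroup_is_group[OF U group_SS])
  have V_H: "subgroup V ?H"
    using SS.subgroup_incl[OF V(1) U V(2)] .
  have cosets: "{u <#\<^bsub>S \<times>\<times> S\<^esub> V | u. u \<in> U} = lcosets\<^bsub>?H\<^esub> V"
    by (auto simp: LCOSETS_def)
  have "(SOME w. w \<in> C) \<in> U" if C: "C \<in> lcosets\<^bsub>?H\<^esub> V" for C
  proof -
    obtain u where "u \<in> U" "C = u <#\<^bsub>?H\<^esub> V"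
      using C by (auto simp: LCOSETS_def)
    then have "C \<noteq> {}"
      using H.lcos_self[OF _ V_H, of u] by auto
    moreover have "C \<subseteq> U"
      using subgroup.lcosets_carrier[OF V_H H.is_group C] by simp
    ultimately show ?thesis
      by (metis some_in_eq subsetD)
  qed
  moreover have "representation Y (act u a) y = representation Y a y" if "u \<in> U" for u
    using representation_SS_act[of u y a] that subgroup.subset[OF U] y by auto
  ultimately show ?thesis
    unfolding rel_trace_def cosets using span_Y by (simp add: representation_sum[OF independent_Y])
qed

lemma representation_mult:
  "representation Y (a * b) z
     = (\<Sum>y | representation Y a y \<noteq> 0. representation Y a y * representation Y (y * b) z)"
proof -
  have "a * b = (\<Sum>y | representation Y a y \<noteq> 0. scale (representation Y a y) y) * b"
    using sum_nonzero_representation_eq[OF independent_Y, of a] span_Y by simp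
  also have "\<dots> = (\<Sum>y | representation Y a y \<noteq> 0. scale (representation Y a y) (y * b))"
    by (simp add: sum_distrib_right scale_mult_left)
  finally show ?thesis
    using span_Y by (simp add: representation_sum[OF independent_Y] representation_scale[OF independent_Y])
qed

lemma representation_SS_act_mult_unit:
  assumes st: "s \<in> carrier S" "t \<in> carrier S"
    and a: "act (s, t) a = a" "a * w = 1" "w * a = 1"
    and y0: "y0 \<in> Y" "\<forall>s\<in>carrier S. act (s, s) y0 = y0"
  shows "representation Y (act (s, t) y * w * y0) y0 = representation Y (y * w * y0) y0"
proof -
  have inv_st: "inv\<^bsub>S\<^esub> s \<in> carrier S" "inv\<^bsub>S\<^esub> t \<in> carrier S"
    using st by simp_all
  have "act (inv\<^bsub>S \<times>\<times> S\<^esub> (s, t)) a = a"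
    using SS_act_inv_cancel[of "(s, t)" a] a(1) st by simp
  then have "act (inv\<^bsub>S\<^esub> t, inv\<^bsub>S\<^esub> s) w = w"
    using SS_act_fixed_inverse[OF inv_st _ a(2,3)] st group_S by (simp add: inv_DirProd)
  then have w_comm: "\<sigma> (inv\<^bsub>S\<^esub> t) * w = w * \<sigma> (inv\<^bsub>S\<^esub> s)"
    using SS_act_fixed_iff inv_st by blast
  have y0_comm: "\<sigma> (inv\<^bsub>S\<^esub> s) * y0 = y0 * \<sigma> (inv\<^bsub>S\<^esub> s)"
    using y0(2) SS_act_fixed_iff inv_st by blast
  have "act (s, t) y * w * y0 = \<sigma> s * y * (\<sigma> (inv\<^bsub>S\<^esub> t) * w) * y0"
    by (simp add: SS_act_def mult.assoc)
  also have "\<dots> = \<sigma> s * y * w * (\<sigma> (inv\<^bsub>S\<^esub> s) * y0)"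
    using w_comm by (simp add: mult.assoc)
  also have "\<dots> = act (s, s) (y * w * y0)"
    using y0_comm by (simp add: SS_act_def mult.assoc)
  finally have "representation Y (act (s, t) y * w * y0) y0
      = representation Y (act (s, s) (y * w * y0)) (act (s, s) y0)"
    using y0(2) st by simp
  also have "\<dots> = representation Y (y * w * y0) y0"
    using representation_SS_act y0(1) st by simp
  finally show ?thesis .
qed

end

locale modular_basis_algebra = invariant_basis_algebra scale S \<sigma> Y
  for scale :: "'o::comm_ring_1 \<Rightarrow> 'a::ring_1 \<Rightarrow> 'a" and S :: "('g, 'b) monoid_scheme"
    and \<sigma> :: "'g \<Rightarrow> 'a" and Y :: "'a set" +
  fixes m :: "'o set" and p :: nat
  assumes ideal_m: "is_ideal m" and one_notin_m: "1 \<notin> m"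
    and prime_p: "prime p" and p_in_m: "of_nat p \<in> m"
begin

interpretation SS: group "S \<times>\<times> S" by (rule group_SS)

lemma multiple_of_p_in_m: "of_nat p dvd r \<Longrightarrow> r \<in> m"
  using ideal_m p_in_m by (auto simp: is_ideal_def mult.commute)

lemma brauer_nonzero_if_fixed_basis_element:
  assumes U: "subgroup U (S \<times>\<times> S)" and card_U: "card U = p ^ k"
    and y: "y \<in> Y" and y_fixed: "\<forall>u\<in>U. act u y = y"
  shows "brauer_nonzero scale m S \<sigma> U"
proof -
  let ?K = "{a. representation Y a y \<in> m}"
  let ?H = "(S \<times>\<times> S)\<lparr>carrier := U\<rparr>"
  interpret H: group ?H
    by (rule subgroup.subgroup_is_group[OF U group_SS])
  have "subspace ?K"
    using ideal_m span_Y
    by (auto simp: subspace_def is_ideal_def representation_zero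
        representation_add[OF independent_Y] representation_scale[OF independent_Y])
  moreover have "scale r a \<in> ?K" if "r \<in> m" for r a
  proof -
    have "representation Y a y * r \<in> m"
      using that ideal_m by (simp add: is_ideal_def)
    then show ?thesis
      using span_Y by (simp add: representation_scale[OF independent_Y] mult.commute)
  qed
  moreover have "rel_trace S \<sigma> U V a \<in> ?K" if V: "subgroup V (S \<times>\<times> S)" "V \<subset> U" for V a
  proof -
    have "p dvd card (lcosets\<^bsub>?H\<^esub> V)"
      using prime_dvd_card_lcosets[OF H.is_group _ prime_p SS.subgroup_incl[OF V(1) U]] card_U V(2) by auto
    then show ?thesis
      using representation_rel_trace[OF U V(1) _ y y_fixed] V(2)
      by (auto simp: multiple_of_p_in_m mult.assoc elim!: dvdE)
  qed
  ultimately have "brauer_kernel scale m S \<sigma> U \<subseteq> ?K"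
    unfolding brauer_kernel_def by (intro span_minimal) auto
  moreover have "y \<notin> ?K"
    using representation_basis[OF independent_Y y] one_notin_m by simp
  moreover have "y \<in> fixed_pts S \<sigma> U"
    using y_fixed by (simp add: fixed_pts_def)
  ultimately show ?thesis
    unfolding brauer_nonzero_def by blast
qed

lemma fixed_basis_element_if_fixed_unit:
  assumes U: "subgroup U (S \<times>\<times> S)" and card_U: "card U = p ^ k"
    and y0: "y0 \<in> Y" "\<forall>s\<in>carrier S. act (s, s) y0 = y0"
    and unit: "a * w = 1" "w * a = 1" and a_fixed: "\<forall>u\<in>U. act u a = a"
  shows "\<exists>y\<in>Y. \<forall>u\<in>U. act u y = y"
proof (rule ccontr)
  assume "\<not> ?thesis"
  then have no_fixed: "\<And>y. y \<in> Y \<Longrightarrow> \<exists>u\<in>U. act u y \<noteq> y" by blast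
  have U_carrier: "U \<subseteq> carrier S \<times> carrier S"
    using subgroup.subset[OF U] by simp
  let ?c = "representation Y a"
  let ?X = "{y. ?c y \<noteq> 0}"
  let ?h = "\<lambda>y. representation Y (y * w * y0) y0"
  have X: "finite ?X" "?X \<subseteq> Y"
    using finite_representation representation_ne_zero by auto
  have c_invariant: "?c (act u y) = ?c y" if "u \<in> U" "y \<in> Y" for u y
    using representation_SS_act[of u y a] that U_carrier a_fixed by auto
  have h_invariant: "?h (act u y) = ?h y" if "u \<in> U" for u y
    using representation_SS_act_mult_unit[OF _ _ _ unit y0] a_fixed that U_carrier by (cases u) auto
  have "a * (w * y0) = y0"
    using unit(1) by (simp add: mult.assoc[symmetric])
  then have sum_one: "(\<Sum>y\<in>?X. ?c y * ?h y) = 1"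
    using representation_mult[of a "w * y0" y0] y0(1)
    by (simp add: representation_basis[OF independent_Y] mult.assoc)
  let ?H = "(S \<times>\<times> S)\<lparr>carrier := U\<rparr>"
  have "of_nat p dvd (\<Sum>y\<in>?X. ?c y * ?h y)"
  proof (rule prime_dvd_sum_if_no_fixed_points[where G = ?H and act = act])
    show "group ?H"
      by (rule subgroup.subgroup_is_group[OF U group_SS])
    show "act u y \<in> ?X" if "u \<in> carrier ?H" "y \<in> ?X" for u y
      using that X(2) c_invariant[of u y] by auto
    show "act (u \<otimes>\<^bsub>?H\<^esub> v) y = act u (act v y)" if "u \<in> carrier ?H" "v \<in> carrier ?H" for u v y
      using that U_carrier SS_act_mult[of u v y] by auto
    show "\<exists>u\<in>carrier ?H. act u y \<noteq> y" if "y \<in> ?X" for y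
      using no_fixed[of y] that X(2) by auto
    show "?c (act u y) * ?h (act u y) = ?c y * ?h y" if "u \<in> carrier ?H" "y \<in> ?X" for u y
      using c_invariant[of u y] h_invariant[of u y] that X(2) by auto
  qed (use card_U prime_p X(1) in simp_all)
  then show False
    using sum_one multiple_of_p_in_m one_notin_m by metis
qed

end

locale unit_basis_algebra = modular_basis_algebra +
  assumes p_group_S: "\<exists>n. card (carrier S) = p ^ n"
    and units_Y: "\<forall>y\<in>Y. is_unit_elem y"
    and brauer_nonzero_S: "brauer_nonzero scale m S \<sigma> (Delta id (carrier S))"
begin

interpretation S: group S by (rule group_S)

lemma card_Delta_prime_power: "subgroup P S \<Longrightarrow> \<exists>k. card (Delta \<phi> P) = p ^ k"
  using prime_power_card_subgroup[OF group_S _ prime_p] p_group_S card_Delta by metis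

lemma brauer_nonzero_Delta_iff:
  assumes "subgroup P S" "\<phi> \<in> hom (S\<lparr>carrier := P\<rparr>) S"
  shows "brauer_nonzero scale m S \<sigma> (Delta \<phi> P) \<longleftrightarrow> (\<exists>y\<in>Y. \<forall>x\<in>P. act (\<phi> x, x) y = y)"
proof -
  have Delta: "subgroup (Delta \<phi> P) (S \<times>\<times> S)"
    using subgroup_Delta[OF group_S assms] .
  obtain k where card: "card (Delta \<phi> P) = p ^ k"
    using card_Delta_prime_power[OF assms(1)] by blast
  show ?thesis
  proof
    assume "brauer_nonzero scale m S \<sigma> (Delta \<phi> P)"
    then show "\<exists>y\<in>Y. \<forall>x\<in>P. act (\<phi> x, x) y = y"
      using fixed_basis_element_if_brauer_nonzero[OF Delta] by (simp add: ball_Delta_iff)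
  next
    assume "\<exists>y\<in>Y. \<forall>x\<in>P. act (\<phi> x, x) y = y"
    then show "brauer_nonzero scale m S \<sigma> (Delta \<phi> P)"
      using brauer_nonzero_if_fixed_basis_element[OF Delta card] by (auto simp: ball_Delta_iff)
  qed
qed

lemma fusion_hom_iff:
  "fusion_hom scale m S \<sigma> P Q \<phi> \<longleftrightarrow>
     subgroup P S \<and> subgroup Q S \<and> \<phi> ` P \<subseteq> Q \<and> inj_on \<phi> P \<and> \<phi> \<in> hom (S\<lparr>carrier := P\<rparr>) S \<and>
     (\<exists>y\<in>Y. \<forall>x\<in>P. act (\<phi> x, x) y = y)"
proof (cases "subgroup P S \<and> subgroup Q S \<and> \<phi> ` P \<subseteq> Q")
  case True
  then have hom_iff: "\<phi> \<in> hom (S\<lparr>carrier := P\<rparr>) S \<longleftrightarrow>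
      (\<forall>x\<in>P. \<forall>y\<in>P. \<phi> (x \<otimes>\<^bsub>S\<^esub> y) = \<phi> x \<otimes>\<^bsub>S\<^esub> \<phi> y)"
    using subgroup.subset[of Q S] by (auto simp: hom_def)
  show ?thesis
  proof
    assume "fusion_hom scale m S \<sigma> P Q \<phi>"
    then show "subgroup P S \<and> subgroup Q S \<and> \<phi> ` P \<subseteq> Q \<and> inj_on \<phi> P \<and> \<phi> \<in> hom (S\<lparr>carrier := P\<rparr>) S \<and>
        (\<exists>y\<in>Y. \<forall>x\<in>P. act (\<phi> x, x) y = y)"
      using hom_iff brauer_nonzero_Delta_iff[of P \<phi>] unfolding fusion_hom_def by simp
  next
    assume "subgroup P S \<and> subgroup Q S \<and> \<phi> ` P \<subseteq> Q \<and> inj_on \<phi> P \<and> \<phi> \<in> hom (S\<lparr>carrier := P\<rparr>) S \<and>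
        (\<exists>y\<in>Y. \<forall>x\<in>P. act (\<phi> x, x) y = y)"
    then show "fusion_hom scale m S \<sigma> P Q \<phi>"
      using hom_iff brauer_nonzero_Delta_iff[of P \<phi>] unfolding fusion_hom_def by simp
  qed
next
  case False
  then show ?thesis
    unfolding fusion_hom_def by blast
qed

lemma hom_id_subgroup: "subgroup P S \<Longrightarrow> id \<in> hom (S\<lparr>carrier := P\<rparr>) S"
  using subgroup.subset by (fastforce simp: hom_def)

lemma basis_element_centralizing_S: "\<exists>y0\<in>Y. \<forall>s\<in>carrier S. act (s, s) y0 = y0"
  using brauer_nonzero_S brauer_nonzero_Delta_iff[OF S.subgroup_self hom_id_subgroup[OF S.subgroup_self]]
  by simp

lemma fusion_hom_inclusion:
  assumes "subgroup P S" "subgroup Q S" "P \<subseteq> Q"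
  shows "fusion_hom scale m S \<sigma> P Q id"
proof -
  obtain y0 where "y0 \<in> Y" "\<forall>s\<in>carrier S. act (s, s) y0 = y0"
    using basis_element_centralizing_S by blast
  then show ?thesis
    using assms hom_id_subgroup[OF assms(1)] subgroup.subset[OF assms(1)]
    unfolding fusion_hom_iff by auto
qed

lemma fixed_basis_element_if_fixed_unit_Delta:
  assumes "subgroup P S" "\<phi> \<in> hom (S\<lparr>carrier := P\<rparr>) S"
    and "a * w = 1" "w * a = 1" "\<forall>x\<in>P. act (\<phi> x, x) a = a"
  shows "\<exists>y\<in>Y. \<forall>x\<in>P. act (\<phi> x, x) y = y"
proof -
  obtain y0 where "y0 \<in> Y" "\<forall>s\<in>carrier S. act (s, s) y0 = y0"
    using basis_element_centralizing_S by blast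
  moreover obtain k where "card (Delta \<phi> P) = p ^ k"
    using card_Delta_prime_power[OF assms(1)] by blast
  ultimately show ?thesis
    using fixed_basis_element_if_fixed_unit[OF subgroup_Delta[OF group_S assms(1,2)]] assms(3-5)
    by (simp add: ball_Delta_iff)
qed

lemma fusion_hom_comp:
  assumes "fusion_hom scale m S \<sigma> P Q \<phi>" "fusion_hom scale m S \<sigma> Q R \<psi>"
  shows "fusion_hom scale m S \<sigma> P R (\<psi> \<circ> \<phi>)"
proof -
  obtain y1 y2 where y: "y1 \<in> Y" "y2 \<in> Y"
    and y1_fixed: "\<forall>x\<in>P. act (\<phi> x, x) y1 = y1" and y2_fixed: "\<forall>x\<in>Q. act (\<psi> x, x) y2 = y2"
    using assms unfolding fusion_hom_iff by blast
  obtain w1 w2 where w: "y1 * w1 = 1" "w1 * y1 = 1" "y2 * w2 = 1" "w2 * y2 = 1"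
    using units_Y y by (meson is_unit_elem_def)
  have P: "subgroup P S" and Q: "subgroup Q S" and R: "subgroup R S"
    and image: "\<phi> ` P \<subseteq> Q" "\<psi> ` Q \<subseteq> R"
    and inj: "inj_on \<phi> P" "inj_on \<psi> Q"
    and hom: "\<phi> \<in> hom (S\<lparr>carrier := P\<rparr>) S" "\<psi> \<in> hom (S\<lparr>carrier := Q\<rparr>) S"
    using assms unfolding fusion_hom_iff by auto
  have "\<phi> \<in> hom (S\<lparr>carrier := P\<rparr>) (S\<lparr>carrier := Q\<rparr>)"
    using hom(1) image(1) by (auto simp: hom_def)
  then have comp_hom: "\<psi> \<circ> \<phi> \<in> hom (S\<lparr>carrier := P\<rparr>) S"
    using hom(2) by (rule hom_compose)
  have "(y2 * y1) * (w1 * w2) = 1" "(w1 * w2) * (y2 * y1) = 1"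
    using w by (simp_all add: mult.assoc[symmetric]) (simp_all add: mult.assoc)
  moreover have "\<forall>x\<in>P. act ((\<psi> \<circ> \<phi>) x, x) (y2 * y1) = y2 * y1"
  proof
    fix x assume x: "x \<in> P"
    then have "\<phi> x \<in> Q" "x \<in> carrier S" "\<phi> x \<in> carrier S" "\<psi> (\<phi> x) \<in> carrier S"
      using image P Q R subgroup.subset by blast+
    then show "act ((\<psi> \<circ> \<phi>) x, x) (y2 * y1) = y2 * y1"
      using SS_act_fixed_mult y1_fixed y2_fixed x by simp
  qed
  ultimately obtain y where "y \<in> Y" "\<forall>x\<in>P. act ((\<psi> \<circ> \<phi>) x, x) y = y"
    using fixed_basis_element_if_fixed_unit_Delta[OF P comp_hom] by blast
  then show ?thesis
    unfolding fusion_hom_iff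
    using P R image comp_hom comp_inj_on[OF inj(1) inj_on_subset[OF inj(2) image(1)]] by auto
qed

lemma fusion_hom_onto_image:
  assumes "fusion_hom scale m S \<sigma> P Q \<phi>"
  shows "fusion_hom scale m S \<sigma> P (\<phi> ` P) \<phi>"
proof -
  have P: "subgroup P S" and hom: "\<phi> \<in> hom (S\<lparr>carrier := P\<rparr>) S"
    using assms unfolding fusion_hom_iff by auto
  then have "group_hom (S\<lparr>carrier := P\<rparr>) S \<phi>"
    by (simp add: group_hom_def group_hom_axioms_def subgroup.subgroup_is_group group_S)
  then have "subgroup (\<phi> ` P) S"
    using group_hom.img_is_subgroup by fastforce
  then show ?thesis
    using assms unfolding fusion_hom_iff by auto
qed

lemma fusion_hom_inv_into:
  assumes "fusion_hom scale m S \<sigma> P Q \<phi>"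
  shows "fusion_hom scale m S \<sigma> (\<phi> ` P) P (inv_into P \<phi>)"
proof -
  let ?\<psi> = "inv_into P \<phi>"
  obtain y where y: "y \<in> Y" "\<forall>x\<in>P. act (\<phi> x, x) y = y"
    using assms unfolding fusion_hom_iff by blast
  obtain w where w: "y * w = 1" "w * y = 1"
    using units_Y y(1) by (meson is_unit_elem_def)
  have P: "subgroup P S" and inj: "inj_on \<phi> P" and hom: "\<phi> \<in> hom (S\<lparr>carrier := P\<rparr>) S"
    and image: "subgroup (\<phi> ` P) S"
    using assms fusion_hom_onto_image[OF assms] unfolding fusion_hom_iff by auto
  have inv_hom: "?\<psi> \<in> hom (S\<lparr>carrier := \<phi> ` P\<rparr>) S"
    using hom_inv_into_subgroup[OF group_S P hom inj] .
  have "\<forall>z\<in>\<phi> ` P. act (?\<psi> z, z) w = w"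
  proof
    fix z assume "z \<in> \<phi> ` P"
    then obtain x where x: "x \<in> P" "z = \<phi> x" by blast
    then have "x \<in> carrier S" "\<phi> x \<in> carrier S"
      using P image subgroup.subset by blast+
    then show "act (?\<psi> z, z) w = w"
      using SS_act_fixed_inverse[OF _ _ _ w] y(2) x inv_into_f_f[OF inj] by simp
  qed
  then obtain y' where "y' \<in> Y" "\<forall>z\<in>\<phi> ` P. act (?\<psi> z, z) y' = y'"
    using fixed_basis_element_if_fixed_unit_Delta[OF image inv_hom w(2,1)] by blast
  then show ?thesis
    unfolding fusion_hom_iff
    using P image inv_hom inj_on_inv_into[of "\<phi> ` P" \<phi> P] by (auto intro: inv_into_into)
qed

lemma divisible: "divisible scale m S \<sigma>"
  unfolding divisible_def
  using fusion_hom_inclusion fusion_hom_comp fusion_hom_onto_image fusion_hom_inv_into by blast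

end

theorem lemma2p7:
  fixes m :: "'o::idom set" and p :: nat
    and S :: "('g, 'b) monoid_scheme"
    and scale :: "'o \<Rightarrow> 'a::ring_1 \<Rightarrow> 'a" and \<sigma> :: "'g \<Rightarrow> 'a"
  assumes "coeff_ring m p"
    and "group S" and "finite (carrier S)" and "\<exists>n. card (carrier S) = p ^ n"
    and "bifree_algebra scale S \<sigma>"
    and "brauer_nonzero scale m S \<sigma> (Delta id (carrier S))"
    and "\<exists>Y. O_basis scale Y \<and> SS_invariant S \<sigma> Y \<and> (\<forall>y\<in>Y. is_unit_elem y)"
  shows "divisible scale m S \<sigma>"
proof -
  have m: "is_ideal m" "m \<noteq> UNIV" "prime p" "of_nat p \<in> m"
    using assms(1) by (auto simp: coeff_ring_def local_ring_max_def maximal_ideal_def residue_char_def)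
  then have "1 \<notin> m"
    by (metis UNIV_eq_I is_ideal_def mult_1_right)
  obtain Y where Y: "O_basis scale Y" "SS_invariant S \<sigma> Y" "\<forall>y\<in>Y. is_unit_elem y"
    using assms(7) by blast
  have "interior_algebra scale S \<sigma>"
    using assms(5) by (simp add: bifree_algebra_def)
  then have "unit_basis_algebra scale S \<sigma> Y m p"
    using m \<open>1 \<notin> m\<close> Y assms(2,4,6)
    unfolding unit_basis_algebra_def unit_basis_algebra_axioms_def modular_basis_algebra_def
      modular_basis_algebra_axioms_def invariant_basis_algebra_def invariant_basis_algebra_axioms_def
      interior_algebra_def O_basis_def
    by blast
  then show ?thesis
    by (rule unit_basis_algebra.divisible)
qed

end
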